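(* Let $w\ge0$ and let $\tilde x:[0,1]\to\mathbb R$ solve $$\tilde x'(s)=(w+1)-w\tanh\bigl(s\,\tilde x(s)\bigr),\qquad \tilde x(0)=x.$$ If $x\ge-\frac{\sqrt{w+1}}{2}$, then $\tilde x(1)\ge\frac{\sqrt{w+1}}{4}$.
   Context: This ODE is the (time-reparametrized, $T\to\infty$ limit of the) guided probability flow ODE with guidance parameter $w$ toward the component $z=+1$ for the Gaussian mixture $\frac12\mathcal N(1,1)+\frac12\mathcal N(-1,1)$; $\tilde x(1)$ is the output sample for initialization $x$. *)

theory Defs
  imports "HOL-Analysis.Analysis"
begin

end

theory Submission
  imports Defs
begin

text \<open>
  Since \<open>tanh < 1\<close>, the speed \<open>(w + 1) - w tanh(s x(s))\<close> is always at least 1, so the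
  solution is increasing. Put \<open>a = sqrt (w + 1)\<close> and suppose \<open>x(1) < a/4\<close>. Then
  \<open>s x(s) \<le> 1/4\<close> for \<open>s \<le> 1/a\<close>, hence \<open>tanh (s x(s)) \<le> 1/4\<close> and the speed is at least
  \<open>3a\<^sup>2/4\<close> there. The solution thus gains \<open>3a/4\<close> on \<open>[0, 1/a]\<close> and does not lose on
  \<open>[1/a, 1]\<close>, so \<open>x(1) \<ge> -a/2 + 3a/4 = a/4\<close>, a contradiction.
\<close>

lemma increment_ge_of_derivative_ge:
  fixes f f' :: "real \<Rightarrow> real"
  assumes "p \<le> q"
    and deriv: "\<And>s. s \<in> {p..q} \<Longrightarrow> (f has_real_derivative f' s) (at s within {p..q})"
    and bound: "\<And>s. s \<in> {p<..<q} \<Longrightarrow> c \<le> f' s"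
  shows "c * (q - p) \<le> f q - f p"
proof -
  let ?g = "\<lambda>s. f s - c * s"
  have "?g p \<le> ?g q"
  proof (rule DERIV_nonneg_imp_increasing_open[OF \<open>p \<le> q\<close>])
    fix s assume s: "p < s" "s < q"
    then have "(f has_real_derivative f' s) (at s)"
      using deriv[of s] at_within_Icc_at[of p s q] by auto
    then have "(?g has_real_derivative f' s - c) (at s)"
      by (auto intro!: derivative_eq_intros)
    then show "\<exists>y. (?g has_real_derivative y) (at s) \<and> 0 \<le> y"
      using bound[of s] s by auto
  next
    have "continuous_on {p..q} f"
      using deriv DERIV_continuous continuous_on_eq_continuous_within by blast
    then show "continuous_on {p..q} ?g"
      by (intro continuous_intros)
  qed
  then show ?thesis by (simp add: algebra_simps)
qed

lemma tanh_le_self: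
  fixes y :: real
  assumes "0 \<le> y"
  shows "tanh y \<le> y"
proof -
  have "0 * (y - 0) \<le> (y - tanh y) - (0 - tanh 0)"
  proof (rule increment_ge_of_derivative_ge[where f = "\<lambda>t. t - tanh t" and f' = "\<lambda>t. tanh t ^ 2"])
    fix s :: real
    have "cosh s \<noteq> 0" by (metis cosh_real_pos less_irrefl)
    then have "((\<lambda>t. t - tanh t) has_real_derivative tanh s ^ 2) (at s)"
      by (auto intro!: derivative_eq_intros)
    then show "((\<lambda>t. t - tanh t) has_real_derivative tanh s ^ 2) (at s within {0..y})"
      by (rule has_field_derivative_at_within)
  qed (use assms in auto)
  then show ?thesis by simp
qed

lemma guided_speed_ge_1:
  fixes w t :: real
  assumes "0 \<le> w"
  shows "1 \<le> (w + 1) - w * tanh t"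
  using mult_left_mono[OF less_imp_le[OF tanh_real_lt_1[of t]] assms] by simp

lemma guided_speed_ge_three_quarters:
  fixes w t :: real
  assumes "0 \<le> w" and "t \<le> 1/4"
  shows "3/4 * (w + 1) \<le> (w + 1) - w * tanh t"
proof -
  have "tanh t \<le> tanh (1/4)"
    using assms(2) by simp
  also have "\<dots> \<le> 1/4"
    by (rule tanh_le_self) simp
  finally have "w * tanh t \<le> w * (1/4)"
    using assms(1) by (rule mult_left_mono)
  then show ?thesis by simp
qed

context
  fixes w :: real and xt :: "real \<Rightarrow> real"
  assumes w: "0 \<le> w"
    and ode: "\<And>s. s \<in> {0..1} \<Longrightarrow>
       (xt has_real_derivative ((w + 1) - w * tanh (s * xt s))) (at s within {0..1})"
begin

lemma guided_flow_has_derivative_within_subinterval: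
  assumes "0 \<le> p" "q \<le> 1" "s \<in> {p..q}"
  shows "(xt has_real_derivative ((w + 1) - w * tanh (s * xt s))) (at s within {p..q})"
  using ode[of s] assms by (auto intro: DERIV_subset)

lemma guided_flow_increment_ge_length:
  assumes "0 \<le> p" "p \<le> q" "q \<le> 1"
  shows "q - p \<le> xt q - xt p"
proof -
  have "1 * (q - p) \<le> xt q - xt p"
    by (rule increment_ge_of_derivative_ge[OF \<open>p \<le> q\<close>
          guided_flow_has_derivative_within_subinterval guided_speed_ge_1[OF w]])
      (use assms in auto)
  then show ?thesis by simp
qed

lemma guided_flow_initial_gain:
  defines "a \<equiv> sqrt (w + 1)"
  assumes small: "xt 1 \<le> a / 4"
  shows "3/4 * a \<le> xt (1/a) - xt 0"
proof -
  have a: "1 \<le> a" "a\<^sup>2 = w + 1" "1/a \<le> 1"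
    using w by (simp_all add: a_def)
  have speed: "3/4 * a\<^sup>2 \<le> (w + 1) - w * tanh (s * xt s)" if s: "s \<in> {0<..<1/a}" for s
  proof -
    have "s \<le> 1"
      using s a(3) by simp
    then have "xt s \<le> xt 1"
      using guided_flow_increment_ge_length[of s 1] s by auto
    then have "s * xt s \<le> s * (a / 4)"
      using s small by (intro mult_left_mono) auto
    also have "\<dots> \<le> (1/a) * (a / 4)"
      using s a by (intro mult_right_mono) auto
    finally have "s * xt s \<le> 1/4"
      using a by simp
    then show ?thesis
      using guided_speed_ge_three_quarters[OF w] a by simp
  qed
  have "3/4 * a\<^sup>2 * (1/a - 0) \<le> xt (1/a) - xt 0"
    by (rule increment_ge_of_derivative_ge
          [OF _ guided_flow_has_derivative_within_subinterval speed])
      (use a in auto)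
  then show ?thesis
    using a by (simp add: power2_eq_square)
qed

end

theorem lemma4p2:
  fixes w x :: real and xt :: "real \<Rightarrow> real"
  assumes w: "w \<ge> 0"
    and ode: "\<And>s. s \<in> {0..1} \<Longrightarrow>
       (xt has_real_derivative ((w + 1) - w * tanh (s * xt s))) (at s within {0..1})"
    and init: "xt 0 = x"
    and x: "x \<ge> - sqrt (w + 1) / 2"
  shows "xt 1 \<ge> sqrt (w + 1) / 4"
proof (rule ccontr)
  define a where "a = sqrt (w + 1)"
  assume "\<not> ?thesis"
  then have small: "xt 1 < a / 4"
    by (simp add: a_def)
  have a: "0 \<le> a" "1/a \<le> 1"
    using w by (simp_all add: a_def)
  have "3/4 * a \<le> xt (1/a) - xt 0"
    using guided_flow_initial_gain[OF w ode] small by (simp add: a_def)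
  moreover have "1 - 1/a \<le> xt 1 - xt (1/a)"
    using guided_flow_increment_ge_length[OF w ode, of "1/a" 1] a by auto
  moreover have "- a / 2 \<le> xt 0"
    using init x by (simp add: a_def)
  ultimately show False
    using small a by linarith
qed

end
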